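(* Let $(\xi_n)_{n\ge0}$ be a real-valued process adapted to a filtration $(\mathcal F_n)_{n\ge0}$, and suppose there exist $a\in\mathbb R$ and $b>0$ such that: (1) $\mathbb E\big((\xi_{k+1}-\xi_k)1_{\{\xi_k\ge a\}}\mid\mathcal F_k\big)\le 0$ a.s. for all $k$; (2) $\limsup_{k\to\infty}1_{\{\xi_k<a<\xi_{k+1}\}}(\xi_{k+1}-a)\le b$ almost surely; (3) $\sum_k\mathbb E\big[(\xi_{k+1}-\xi_k)^2 1_{\{\xi_k\ge a\}}\big]<\infty$. Then $\limsup_{n\to\infty}\xi_n<\infty$ almost surely. *)

theory Defs
  imports "HOL-Probability.Probability"
begin

end

theory Submission
  imports Defs
begin

(*
  Put D_k = (xi_{k+1} - xi_k) 1_{xi_k >= a}.  Its Doob decomposition D_k = Y_k + C_k with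
  C_k = E(D_k | F_k) <= 0 (hypothesis 1) and Y_k = D_k - C_k gives a sequence of square-integrable
  martingale differences with E Y_k^2 <= E D_k^2, so sum_k E Y_k^2 < oo (hypothesis 3).
  Kolmogorov's maximal inequality then shows that the partial sums S_n = sum_{k<n} Y_k are
  almost surely bounded.  Pathwise, while xi stays above a its increments are dominated by those
  of S, and (hypothesis 2) every entrance into (a, oo) eventually starts below a + b + 1; hence
  xi is bounded above along almost every path.
*)

text \<open>Products of square-integrable functions on a finite measure space are integrable
  (from \<open>2|fg| \<le> f\<^sup>2 + g\<^sup>2\<close>); this gives all integrability side conditions below.\<close>

lemma (in finite_measure) integrable_mult_square_integrable:
  fixes f g :: "'a \<Rightarrow> real"
  assumes [measurable]: "f \<in> borel_measurable M" "g \<in> borel_measurable M"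
    and "integrable M (\<lambda>x. (f x)\<^sup>2)" "integrable M (\<lambda>x. (g x)\<^sup>2)"
  shows "integrable M (\<lambda>x. f x * g x)"
proof (rule Bochner_Integration.integrable_bound[where f="\<lambda>x. (f x)\<^sup>2 + (g x)\<^sup>2"])
  show "integrable M (\<lambda>x. (f x)\<^sup>2 + (g x)\<^sup>2)" using assms by auto
  show "AE x in M. norm (f x * g x) \<le> norm ((f x)\<^sup>2 + (g x)\<^sup>2)"
  proof (rule AE_I2)
    fix x
    have "0 \<le> (\<bar>f x\<bar> - \<bar>g x\<bar>)\<^sup>2" by simp
    then have "2 * \<bar>f x * g x\<bar> \<le> (f x)\<^sup>2 + (g x)\<^sup>2"
      by (simp add: power2_diff abs_mult)
    then show "norm (f x * g x) \<le> norm ((f x)\<^sup>2 + (g x)\<^sup>2)" by auto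
  qed
qed auto

lemma (in finite_measure) square_integrable_add_diff:
  fixes f g :: "'a \<Rightarrow> real"
  assumes [measurable]: "f \<in> borel_measurable M" "g \<in> borel_measurable M"
    and "integrable M (\<lambda>x. (f x)\<^sup>2)" "integrable M (\<lambda>x. (g x)\<^sup>2)"
  shows "integrable M (\<lambda>x. (f x + g x)\<^sup>2)" "integrable M (\<lambda>x. (f x - g x)\<^sup>2)"
proof -
  have fg: "integrable M (\<lambda>x. f x * g x)"
    using integrable_mult_square_integrable assms by auto
  have "(\<lambda>x. (f x + g x)\<^sup>2) = (\<lambda>x. (f x)\<^sup>2 + 2 * (f x * g x) + (g x)\<^sup>2)"
    by (auto simp: power2_eq_square algebra_simps)
  then show "integrable M (\<lambda>x. (f x + g x)\<^sup>2)" using fg assms by auto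
  have "(\<lambda>x. (f x - g x)\<^sup>2) = (\<lambda>x. (f x)\<^sup>2 - 2 * (f x * g x) + (g x)\<^sup>2)"
    by (auto simp: power2_eq_square algebra_simps)
  then show "integrable M (\<lambda>x. (f x - g x)\<^sup>2)" using fg assms by auto
qed

lemma square_integrable_mult_indicator:
  fixes f :: "'a \<Rightarrow> real"
  assumes "A \<in> sets M" "integrable M (\<lambda>x. (f x)\<^sup>2)"
  shows "integrable M (\<lambda>x. (f x * indicator A x)\<^sup>2)"
proof -
  have "(\<lambda>x. (f x * indicator A x)\<^sup>2) = (\<lambda>x. (f x)\<^sup>2 * indicator A x)"
    by (auto simp: indicator_def)
  then show ?thesis using integrable_real_mult_indicator[OF assms] by simp
qed

lemma summable_square_integrals:
  fixes f :: "nat \<Rightarrow> 'a \<Rightarrow> real"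
  assumes [measurable]: "\<And>k. f k \<in> borel_measurable M"
    and fin: "(\<Sum>k. \<integral>\<^sup>+ x. ennreal ((f k x)\<^sup>2) \<partial>M) < \<infinity>"
  shows "\<And>k. integrable M (\<lambda>x. (f k x)\<^sup>2)" and "summable (\<lambda>k. \<integral>x. (f k x)\<^sup>2 \<partial>M)"
proof -
  show sq: "integrable M (\<lambda>x. (f k x)\<^sup>2)" for k
    using ennreal_suminf_lessD[OF fin, of k] by (intro integrableI_nonneg) auto
  have "(\<integral>\<^sup>+ x. ennreal ((f k x)\<^sup>2) \<partial>M) = ennreal (\<integral>x. (f k x)\<^sup>2 \<partial>M)" for k
    using sq by (intro nn_integral_eq_integral) auto
  then show "summable (\<lambda>k. \<integral>x. (f k x)\<^sup>2 \<partial>M)"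
    using fin by (intro summable_suminf_not_top) auto
qed

locale filtered_prob_space = prob_space M for M :: "'a measure" +
  fixes F :: "nat \<Rightarrow> 'a measure"
  assumes subalg: "\<And>n. subalgebra M (F n)"
    and filt_mono: "\<And>m n. m \<le> n \<Longrightarrow> sets (F m) \<subseteq> sets (F n)"
begin

lemma space_F: "space (F n) = space M"
  using subalg[of n] by (simp add: subalgebra_def)

lemma sets_F_M: "A \<in> sets (F n) \<Longrightarrow> A \<in> sets M"
  using subalg[of n] by (auto simp: subalgebra_def)

lemma measurable_F_mono:
  "m \<le> n \<Longrightarrow> f \<in> borel_measurable (F m) \<Longrightarrow> f \<in> borel_measurable (F n)"
  using measurable_from_subalg[of "F n" "F m"] subalg[of n] subalg[of m] filt_mono[of m n]
  by (auto simp: subalgebra_def)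

lemma measurable_F_M: "f \<in> borel_measurable (F n) \<Longrightarrow> f \<in> borel_measurable M"
  using measurable_from_subalg[OF subalg] by blast

lemma sigma_finite_subalgebra_F: "sigma_finite_subalgebra M (F n)"
  by (intro finite_measure_subalgebra_is_sigma_finite)
    (simp add: finite_measure_subalgebra_def finite_measure_subalgebra_axioms_def
      subalg finite_measure_axioms)

end

section \<open>Square-integrable martingale differences\<close>

text \<open>\<open>Y k\<close> is \<open>F (Suc k)\<close>-measurable, square integrable and orthogonal to every
  square-integrable \<open>F k\<close>-measurable function, i.e. \<open>E(Y k | F k) = 0\<close>.\<close>

locale L2_martingale_differences = filtered_prob_space +
  fixes Y :: "nat \<Rightarrow> 'a \<Rightarrow> real"
  assumes Y_adapted: "\<And>k. Y k \<in> borel_measurable (F (Suc k))"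
    and Y_square_integrable: "\<And>k. integrable M (\<lambda>x. (Y k x)\<^sup>2)"
    and Y_orthogonal: "\<And>k Z. Z \<in> borel_measurable (F k) \<Longrightarrow> integrable M (\<lambda>x. (Z x)\<^sup>2) \<Longrightarrow>
      (\<integral>x. Z x * Y k x \<partial>M) = 0"
begin

definition S :: "nat \<Rightarrow> 'a \<Rightarrow> real" where
  "S n x = (\<Sum>k<n. Y k x)"

lemma S_Suc: "S (Suc n) x = S n x + Y n x"
  by (simp add: S_def)

lemma Y_measurable[measurable]: "Y k \<in> borel_measurable M"
  using measurable_F_M[OF Y_adapted] .

lemma S_adapted: "S n \<in> borel_measurable (F n)"
  unfolding S_def by (intro borel_measurable_sum measurable_F_mono[OF _ Y_adapted]) auto

lemma S_measurable[measurable]: "S n \<in> borel_measurable M"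
  using measurable_F_M[OF S_adapted] .

lemma S_square_integrable: "integrable M (\<lambda>x. (S n x)\<^sup>2)"
proof (induction n)
  case 0 then show ?case by (simp add: S_def)
next
  case (Suc n)
  then show ?case
    using square_integrable_add_diff(1)[OF S_measurable Y_measurable Suc Y_square_integrable]
    by (simp add: S_Suc)
qed

text \<open>Pythagoras: on an event known at time \<open>n\<close>, the second moment of the partial sum grows
  exactly by that of the new increment, because the cross term vanishes.\<close>

lemma square_integral_increment:
  assumes A: "A \<in> sets (F n)"
  shows "(\<integral>x. (S (Suc n) x * indicator A x)\<^sup>2 \<partial>M)
    = (\<integral>x. (S n x * indicator A x)\<^sup>2 \<partial>M) + (\<integral>x. (Y n x * indicator A x)\<^sup>2 \<partial>M)"
proof -
  have [measurable]: "A \<in> sets M" using sets_F_M[OF A] .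
  define Z where "Z x = S n x * indicator A x" for x
  have Z_adapted: "Z \<in> borel_measurable (F n)"
    unfolding Z_def using S_adapted A by measurable
  have Z_sq: "integrable M (\<lambda>x. (Z x)\<^sup>2)"
    unfolding Z_def by (intro square_integrable_mult_indicator S_square_integrable) simp
  have ZY: "integrable M (\<lambda>x. Z x * Y n x)"
    using Z_sq Y_square_integrable measurable_F_M[OF Z_adapted]
    by (intro integrable_mult_square_integrable) auto
  have expand: "(\<lambda>x. (S (Suc n) x * indicator A x)\<^sup>2)
      = (\<lambda>x. (Z x)\<^sup>2 + 2 * (Z x * Y n x) + (Y n x * indicator A x)\<^sup>2)"
    by (auto simp: Z_def S_Suc indicator_def power2_eq_square algebra_simps)
  show ?thesis
    unfolding expand
    using Z_sq ZY square_integrable_mult_indicator[OF _ Y_square_integrable]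
      Y_orthogonal[OF Z_adapted Z_sq]
    by (simp add: Z_def)
qed

lemma square_integral_mono_on_event:
  assumes "k \<le> n" "A \<in> sets (F k)"
  shows "(\<integral>x. (S k x * indicator A x)\<^sup>2 \<partial>M) \<le> (\<integral>x. (S n x * indicator A x)\<^sup>2 \<partial>M)"
  using assms(1)
proof (induction n rule: dec_induct)
  case (step m)
  have A: "A \<in> sets (F m)" using filt_mono[OF step(1)] assms(2) by auto
  have "0 \<le> (\<integral>x. (Y m x * indicator A x)\<^sup>2 \<partial>M)"
    by (intro Bochner_Integration.integral_nonneg) simp
  then show ?case using step(3) square_integral_increment[OF A] by linarith
qed simp

lemma square_integral_S: "(\<integral>x. (S n x)\<^sup>2 \<partial>M) = (\<Sum>k<n. \<integral>x. (Y k x)\<^sup>2 \<partial>M)"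
proof -
  have whole: "(\<integral>x. (f x * indicator (space M) x)\<^sup>2 \<partial>M) = (\<integral>x. (f x)\<^sup>2 \<partial>M)"
    for f :: "'a \<Rightarrow> real"
    by (intro Bochner_Integration.integral_cong) auto
  have "space M \<in> sets (F k)" for k
    using sets.top[of "F k"] by (simp add: space_F)
  then have "(\<integral>x. (S (Suc k) x)\<^sup>2 \<partial>M) = (\<integral>x. (S k x)\<^sup>2 \<partial>M) + (\<integral>x. (Y k x)\<^sup>2 \<partial>M)" for k
    using square_integral_increment[of "space M" k] by (simp add: whole)
  then show ?thesis
    by (induction n) (simp_all add: S_def[of 0])
qed

definition first_passage :: "real \<Rightarrow> nat \<Rightarrow> 'a set" where
  "first_passage l k = {x \<in> space M. l \<le> \<bar>S k x\<bar> \<and> (\<forall>j<k. \<bar>S j x\<bar> < l)}"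

lemma first_passage_adapted: "first_passage l k \<in> sets (F k)"
proof -
  have [measurable]: "Measurable.pred (F k) (\<lambda>x. \<forall>j\<in>{..<k}. \<bar>S j x\<bar> < l)"
  proof (rule pred_intros_finite(3))
    fix j assume "j \<in> {..<k}"
    then have [measurable]: "S j \<in> borel_measurable (F k)"
      using measurable_F_mono[OF _ S_adapted] by simp
    show "Measurable.pred (F k) (\<lambda>x. \<bar>S j x\<bar> < l)" by measurable
  qed simp
  have [measurable]: "S k \<in> borel_measurable (F k)" by (rule S_adapted)
  have "first_passage l k
      = {x \<in> space (F k). l \<le> \<bar>S k x\<bar> \<and> (\<forall>j\<in>{..<k}. \<bar>S j x\<bar> < l)}"
    by (auto simp: first_passage_def space_F)
  then show ?thesis by simp
qed

lemma first_passage_measurable[measurable]: "first_passage l k \<in> sets M"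
  using sets_F_M[OF first_passage_adapted] .

lemma first_passage_disjoint: "disjoint_family (first_passage l)"
proof (unfold disjoint_family_on_def, intro ballI impI)
  fix j k :: nat assume "j \<noteq> k"
  then show "first_passage l j \<inter> first_passage l k = {}"
    by (cases j k rule: linorder_cases) (auto simp: first_passage_def not_less)
qed

lemma exceedance_eq_first_passages:
  "{x \<in> space M. \<exists>k\<le>n. l \<le> \<bar>S k x\<bar>} = (\<Union>k\<le>n. first_passage l k)"
proof (intro equalityI subsetI)
  fix x assume "x \<in> {x \<in> space M. \<exists>k\<le>n. l \<le> \<bar>S k x\<bar>}"
  then obtain k where k: "k \<le> n" "l \<le> \<bar>S k x\<bar>" and x: "x \<in> space M" by auto
  define k0 where "k0 = (LEAST k. l \<le> \<bar>S k x\<bar>)"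
  have "l \<le> \<bar>S k0 x\<bar>" unfolding k0_def by (rule LeastI[of _ k]) (rule k(2))
  moreover have "k0 \<le> k" unfolding k0_def by (rule Least_le) (rule k(2))
  moreover have "\<forall>j<k0. \<bar>S j x\<bar> < l" unfolding k0_def by (auto dest: not_less_Least simp: not_le)
  ultimately show "x \<in> (\<Union>k\<le>n. first_passage l k)"
    using k x by (auto simp: first_passage_def)
qed (auto simp: first_passage_def)

lemma first_passage_bound:
  assumes "k \<le> n" "0 \<le> l"
  shows "l\<^sup>2 * measure M (first_passage l k)
    \<le> (\<integral>x. (S n x * indicator (first_passage l k) x)\<^sup>2 \<partial>M)"
proof -
  let ?A = "first_passage l k"
  have "l\<^sup>2 * measure M ?A = (\<integral>x. l\<^sup>2 * indicator ?A x \<partial>M)"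
    by simp
  also have "\<dots> \<le> (\<integral>x. (S k x * indicator ?A x)\<^sup>2 \<partial>M)"
  proof (rule Bochner_Integration.integral_mono)
    show "integrable M (\<lambda>x. l\<^sup>2 * indicator ?A x)"
      by (intro integrable_mult_right integrable_real_indicator) (auto simp: less_top[symmetric])
    show "integrable M (\<lambda>x. (S k x * indicator ?A x)\<^sup>2)"
      by (intro square_integrable_mult_indicator S_square_integrable) simp
    fix x
    have "x \<in> ?A \<Longrightarrow> l\<^sup>2 \<le> \<bar>S k x\<bar>\<^sup>2"
      using assms(2) by (intro power_mono) (auto simp: first_passage_def)
    then show "l\<^sup>2 * indicator ?A x \<le> (S k x * indicator ?A x)\<^sup>2"
      by (auto simp: indicator_def)
  qed
  also have "\<dots> \<le> (\<integral>x. (S n x * indicator ?A x)\<^sup>2 \<partial>M)"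
    by (rule square_integral_mono_on_event[OF assms(1) first_passage_adapted])
  finally show ?thesis .
qed

theorem kolmogorov_inequality:
  assumes "0 \<le> l"
  shows "l\<^sup>2 * measure M {x \<in> space M. \<exists>k\<le>n. l \<le> \<bar>S k x\<bar>} \<le> (\<integral>x. (S n x)\<^sup>2 \<partial>M)"
proof -
  let ?A = "first_passage l"
  have split: "(S n x * indicator (?A k) x)\<^sup>2 = (S n x)\<^sup>2 * indicator (?A k) x" for x k
    by (auto simp: indicator_def)
  have at_most_one: "(\<Sum>k\<le>n. indicator (?A k) x) \<le> (1::real)" for x
  proof -
    have "(\<Sum>k\<le>n. indicator (?A k) x) = (indicator (\<Union>k\<le>n. ?A k) x :: real)"
      by (rule indicator_UN_disjoint[symmetric], simp,
          rule disjoint_family_on_mono[OF subset_UNIV first_passage_disjoint])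
    then show ?thesis by (simp add: indicator_def)
  qed
  have "l\<^sup>2 * measure M {x \<in> space M. \<exists>k\<le>n. l \<le> \<bar>S k x\<bar>} = (\<Sum>k\<le>n. l\<^sup>2 * measure M (?A k))"
    unfolding exceedance_eq_first_passages sum_distrib_left[symmetric]
    using disjoint_family_on_mono[OF subset_UNIV first_passage_disjoint]
    by (subst finite_measure_finite_Union) auto
  also have "\<dots> \<le> (\<Sum>k\<le>n. \<integral>x. (S n x * indicator (?A k) x)\<^sup>2 \<partial>M)"
    by (intro sum_mono first_passage_bound assms) simp
  also have "\<dots> = (\<integral>x. (S n x)\<^sup>2 * (\<Sum>k\<le>n. indicator (?A k) x) \<partial>M)"
    unfolding split sum_distrib_left
    by (intro Bochner_Integration.integral_sum[symmetric] integrable_real_mult_indicator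
        S_square_integrable) simp
  also have "\<dots> \<le> (\<integral>x. (S n x)\<^sup>2 \<partial>M)"
  proof (rule Bochner_Integration.integral_mono)
    show "integrable M (\<lambda>x. (S n x)\<^sup>2 * (\<Sum>k\<le>n. indicator (?A k) x))"
      unfolding sum_distrib_left
      by (intro Bochner_Integration.integrable_sum integrable_real_mult_indicator
          S_square_integrable) simp
    show "(S n x)\<^sup>2 * (\<Sum>k\<le>n. indicator (?A k) x) \<le> (S n x)\<^sup>2" for x
      using mult_left_mono[OF at_most_one[of x], of "(S n x)\<^sup>2"] by simp
  qed (rule S_square_integrable)
  finally show ?thesis .
qed

text \<open>Letting \<open>n \<rightarrow> \<infinity>\<close>: with summable second moments of the increments, the probability
  that \<open>|S|\<close> ever reaches \<open>l\<close> is at most \<open>(\<Sum>k. E Y\<^sub>k\<^sup>2) / l\<^sup>2\<close> (stated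
  multiplied out).\<close>

lemma kolmogorov_inequality_infinite:
  assumes summ: "summable (\<lambda>k. \<integral>x. (Y k x)\<^sup>2 \<partial>M)" and "0 \<le> l"
  shows "l\<^sup>2 * measure M {x \<in> space M. \<exists>k. l \<le> \<bar>S k x\<bar>} \<le> (\<Sum>k. \<integral>x. (Y k x)\<^sup>2 \<partial>M)"
proof -
  define B where "B n = {x \<in> space M. \<exists>k\<le>n. l \<le> \<bar>S k x\<bar>}" for n
  have "range B \<subseteq> sets M" "incseq B"
    unfolding B_def incseq_def by (auto intro: order_trans)
  then have "(\<lambda>n. l\<^sup>2 * measure M (B n)) \<longlonglongrightarrow> l\<^sup>2 * measure M (\<Union>n. B n)"
    by (intro tendsto_mult_left finite_Lim_measure_incseq)
  moreover have "l\<^sup>2 * measure M (B n) \<le> (\<Sum>k. \<integral>x. (Y k x)\<^sup>2 \<partial>M)" for n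
  proof -
    have "l\<^sup>2 * measure M (B n) \<le> (\<Sum>k<n. \<integral>x. (Y k x)\<^sup>2 \<partial>M)"
      using kolmogorov_inequality[OF assms(2), of n] unfolding square_integral_S B_def .
    also have "\<dots> \<le> (\<Sum>k. \<integral>x. (Y k x)\<^sup>2 \<partial>M)"
      using summ by (intro sum_le_suminf) auto
    finally show ?thesis .
  qed
  ultimately have "l\<^sup>2 * measure M (\<Union>n. B n) \<le> (\<Sum>k. \<integral>x. (Y k x)\<^sup>2 \<partial>M)"
    by (intro LIMSEQ_le_const2) auto
  moreover have "(\<Union>n. B n) = {x \<in> space M. \<exists>k. l \<le> \<bar>S k x\<bar>}"
    unfolding B_def by auto
  ultimately show ?thesis by simp
qed

theorem AE_bounded_partial_sums:
  assumes summ: "summable (\<lambda>k. \<integral>x. (Y k x)\<^sup>2 \<partial>M)"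
  shows "AE x in M. \<exists>K. \<forall>n. \<bar>S n x\<bar> \<le> K"
proof -
  define V where "V = (\<Sum>k. \<integral>x. (Y k x)\<^sup>2 \<partial>M)"
  define Bad where "Bad = {x \<in> space M. \<forall>m::nat. \<exists>k. real m \<le> \<bar>S k x\<bar>}"
  have Bad_measurable: "Bad \<in> sets M" unfolding Bad_def by measurable
  have Bad_le: "l\<^sup>2 * measure M Bad \<le> V" if "0 \<le> l" for l
  proof -
    obtain m :: nat where "l \<le> real m" using real_arch_simple by blast
    then have "Bad \<subseteq> {x \<in> space M. \<exists>k. l \<le> \<bar>S k x\<bar>}"
      unfolding Bad_def by (fastforce intro: order_trans)
    moreover have "{x \<in> space M. \<exists>k. l \<le> \<bar>S k x\<bar>} \<in> sets M" by measurable
    ultimately have "measure M Bad \<le> measure M {x \<in> space M. \<exists>k. l \<le> \<bar>S k x\<bar>}"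
      by (rule finite_measure_mono)
    then have "l\<^sup>2 * measure M Bad \<le> l\<^sup>2 * measure M {x \<in> space M. \<exists>k. l \<le> \<bar>S k x\<bar>}"
      by (rule mult_left_mono) simp
    then show ?thesis
      using kolmogorov_inequality_infinite[OF summ that] unfolding V_def by linarith
  qed
  have "measure M Bad = 0"
  proof (rule ccontr)
    assume "measure M Bad \<noteq> 0"
    then have pos: "0 < measure M Bad" using measure_nonneg[of M Bad] by linarith
    have "0 \<le> V" unfolding V_def using summ by (intro suminf_nonneg) auto
    then have "(sqrt ((V + 1) / measure M Bad))\<^sup>2 * measure M Bad = V + 1"
      using pos by simp
    then show False using Bad_le[of "sqrt ((V + 1) / measure M Bad)"] \<open>0 \<le> V\<close> by simp
  qed
  then have "Bad \<in> null_sets M"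
    using Bad_measurable by (simp add: emeasure_eq_measure null_sets_def)
  then show ?thesis
    by (rule AE_I') (auto simp: Bad_def not_le intro: less_imp_le)
qed

end

section \<open>Doob decomposition\<close>

context filtered_prob_space
begin

text \<open>By Jensen's inequality, conditioning preserves square integrability.\<close>

lemma cond_exp_square_integrable:
  fixes f :: "'a \<Rightarrow> real"
  assumes f_M: "f \<in> borel_measurable M" and f_sq: "integrable M (\<lambda>x. (f x)\<^sup>2)"
  shows "integrable M (\<lambda>x. (real_cond_exp M (F k) f x)\<^sup>2)"
proof -
  interpret sigma_finite_subalgebra M "F k" by (rule sigma_finite_subalgebra_F)
  have "integrable M f"
    by (rule square_integrable_imp_integrable[OF f_M f_sq])
  then show ?thesis
    using integrable_convex_cond_exp[where X=f and I=UNIV and a=0 and b=0 and q="\<lambda>t. t\<^sup>2"]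
      f_sq convex_power2
    by simp
qed

lemma cond_exp_residual_orthogonal:
  fixes f Z :: "'a \<Rightarrow> real"
  assumes Z_adapted: "Z \<in> borel_measurable (F k)" and Z_sq: "integrable M (\<lambda>x. (Z x)\<^sup>2)"
    and f_M: "f \<in> borel_measurable M" and f_sq: "integrable M (\<lambda>x. (f x)\<^sup>2)"
  shows "(\<integral>x. Z x * (f x - real_cond_exp M (F k) f x) \<partial>M) = 0"
proof -
  interpret sigma_finite_subalgebra M "F k" by (rule sigma_finite_subalgebra_F)
  have Z_M: "Z \<in> borel_measurable M" using measurable_F_M[OF Z_adapted] .
  have Zf: "integrable M (\<lambda>x. Z x * f x)"
    by (rule integrable_mult_square_integrable[OF Z_M f_M Z_sq f_sq])
  have ZC: "integrable M (\<lambda>x. Z x * real_cond_exp M (F k) f x)"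
    by (rule integrable_mult_square_integrable[OF Z_M _ Z_sq cond_exp_square_integrable[OF f_M f_sq]])
      simp
  have "(\<integral>x. Z x * real_cond_exp M (F k) f x \<partial>M) = (\<integral>x. Z x * f x \<partial>M)"
    by (rule real_cond_exp_intg(2)[OF Zf Z_adapted f_M])
  then show ?thesis
    using Zf ZC by (simp add: right_diff_distrib)
qed

lemma doob_decomposition:
  fixes D :: "nat \<Rightarrow> 'a \<Rightarrow> real"
  assumes D_adapted: "\<And>k. D k \<in> borel_measurable (F (Suc k))"
    and D_sq: "\<And>k. integrable M (\<lambda>x. (D k x)\<^sup>2)"
  defines "Y \<equiv> \<lambda>k x. D k x - real_cond_exp M (F k) (D k) x"
  shows "L2_martingale_differences M F Y"
    and "\<And>k. (\<integral>x. (Y k x)\<^sup>2 \<partial>M) \<le> (\<integral>x. (D k x)\<^sup>2 \<partial>M)"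
proof -
  define C where "C k = real_cond_exp M (F k) (D k)" for k
  have D_M[measurable]: "D k \<in> borel_measurable M" for k
    using measurable_F_M[OF D_adapted] .
  have C_adapted: "C k \<in> borel_measurable (F k)" for k
    unfolding C_def by simp
  have C_M[measurable]: "C k \<in> borel_measurable M" for k
    using measurable_F_M[OF C_adapted] .
  have C_sq: "integrable M (\<lambda>x. (C k x)\<^sup>2)" for k
    unfolding C_def by (rule cond_exp_square_integrable[OF D_M D_sq])
  have Y_adapted: "Y k \<in> borel_measurable (F (Suc k))" for k
  proof -
    have [measurable]: "D k \<in> borel_measurable (F (Suc k))" by (rule D_adapted)
    have [measurable]: "C k \<in> borel_measurable (F (Suc k))"
      by (rule measurable_F_mono[OF _ C_adapted]) simp
    show ?thesis unfolding Y_def C_def[symmetric] by measurable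
  qed
  have Y_sq: "integrable M (\<lambda>x. (Y k x)\<^sup>2)" for k
    unfolding Y_def C_def[symmetric] by (rule square_integrable_add_diff(2)[OF D_M C_M D_sq C_sq])
  have orth: "(\<integral>x. Z x * Y k x \<partial>M) = 0"
    if "Z \<in> borel_measurable (F k)" "integrable M (\<lambda>x. (Z x)\<^sup>2)" for Z k
    unfolding Y_def by (rule cond_exp_residual_orthogonal[OF that D_M D_sq])
  show "L2_martingale_differences M F Y"
    by unfold_locales (fact Y_adapted Y_sq orth)+
  show "(\<integral>x. (Y k x)\<^sup>2 \<partial>M) \<le> (\<integral>x. (D k x)\<^sup>2 \<partial>M)" for k
  proof -
    have CY: "integrable M (\<lambda>x. C k x * Y k x)"
      by (rule integrable_mult_square_integrable[OF C_M measurable_F_M[OF Y_adapted] C_sq Y_sq])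
    have "(\<lambda>x. (Y k x)\<^sup>2) = (\<lambda>x. (D k x)\<^sup>2 - (C k x)\<^sup>2 - 2 * (C k x * Y k x))"
      by (auto simp: Y_def C_def power2_eq_square algebra_simps)
    then have "(\<integral>x. (Y k x)\<^sup>2 \<partial>M)
        = (\<integral>x. (D k x)\<^sup>2 \<partial>M) - (\<integral>x. (C k x)\<^sup>2 \<partial>M) - 2 * (\<integral>x. C k x * Y k x \<partial>M)"
      using D_sq C_sq CY by simp
    then show ?thesis using orth[OF C_adapted C_sq] by simp
  qed
qed

theorem AE_bounded_martingale_part:
  fixes D :: "nat \<Rightarrow> 'a \<Rightarrow> real"
  assumes D_adapted: "\<And>k. D k \<in> borel_measurable (F (Suc k))"
    and D_fin: "(\<Sum>k. \<integral>\<^sup>+ x. ennreal ((D k x)\<^sup>2) \<partial>M) < \<infinity>"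
  shows "AE x in M. \<exists>K. \<forall>n. \<bar>\<Sum>k<n. D k x - real_cond_exp M (F k) (D k) x\<bar> \<le> K"
proof -
  note D_summable = summable_square_integrals[OF measurable_F_M[OF D_adapted] D_fin]
  interpret Y: L2_martingale_differences M F "\<lambda>k x. D k x - real_cond_exp M (F k) (D k) x"
    by (rule doob_decomposition(1)[OF D_adapted D_summable(1)])
  have "summable (\<lambda>k. \<integral>x. (D k x - real_cond_exp M (F k) (D k) x)\<^sup>2 \<partial>M)"
    using doob_decomposition(2)[OF D_adapted D_summable(1)]
    by (intro summable_comparison_test'[OF D_summable(2)]) auto
  then show ?thesis
    using Y.AE_bounded_partial_sums by (simp only: Y.S_def)
qed

end

section \<open>The pathwise argument\<close>

lemma bounded_above_by_dominated_increments:
  fixes z y :: "nat \<Rightarrow> real" and a c K :: real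
  assumes step: "\<And>k. a \<le> z k \<Longrightarrow> z (Suc k) - z k \<le> y k"
    and sums_bounded: "\<And>n. \<bar>\<Sum>k<n. y k\<bar> \<le> K"
    and overshoot: "\<forall>\<^sub>F k in sequentially. z k < a \<and> a < z (Suc k) \<longrightarrow> z (Suc k) \<le> a + c"
    and "0 \<le> c"
  shows "limsup (\<lambda>n. ereal (z n)) < \<infinity>"
proof -
  define s where "s n = (\<Sum>k<n. y k)" for n
  obtain N where N: "\<And>k. N \<le> k \<Longrightarrow> z k < a \<and> a < z (Suc k) \<longrightarrow> z (Suc k) \<le> a + c"
    using overshoot unfolding eventually_sequentially by auto
  define B where "B = max (a + c) (Max (z ` {..N}))"
  have early: "k \<le> N \<Longrightarrow> z k \<le> B" for k
    unfolding B_def by (intro max.coboundedI2 Max_ge) auto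
  text \<open>Above \<open>a\<close>, \<open>z n\<close> exceeds \<open>B\<close> by at most the growth of \<open>s\<close> since the last entrance.\<close>
  have above: "a \<le> z n \<Longrightarrow> \<exists>m\<le>n. z n \<le> B + s n - s m" for n
  proof (induction n)
    case 0 then show ?case using early[of 0] by auto
  next
    case (Suc n)
    consider "Suc n \<le> N" | "N \<le> n" "z n < a" | "a \<le> z n" by linarith
    then show ?case
    proof cases
      case 1 then show ?thesis using early[of "Suc n"] by (intro exI[of _ "Suc n"]) auto
    next
      case 2
      then have "z (Suc n) \<le> a + c" using N[of n] \<open>0 \<le> c\<close> by fastforce
      then show ?thesis unfolding B_def by (intro exI[of _ "Suc n"]) auto
    next
      case 3
      then obtain m where "m \<le> n" "z n \<le> B + s n - s m" using Suc.IH by auto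
      moreover have "z (Suc n) - z n \<le> s (Suc n) - s n" using step[OF 3] by (simp add: s_def)
      ultimately show ?thesis by (intro exI[of _ m]) auto
    qed
  qed
  define U where "U = max a (B + 2 * K)"
  have "z n \<le> U" for n
  proof (cases "a \<le> z n")
    case True
    then obtain m where "z n \<le> B + s n - s m" using above by auto
    moreover have "s n - s m \<le> 2 * K" using sums_bounded[of n] sums_bounded[of m] by (auto simp: s_def)
    ultimately show ?thesis by (auto simp: U_def)
  qed (auto simp: U_def)
  then have "limsup (\<lambda>n. ereal (z n)) \<le> ereal U"
    by (intro Limsup_bounded always_eventually allI) simp
  then show ?thesis by (rule le_less_trans) simp
qed

lemma eventually_overshoot_le:
  fixes \<xi> :: "nat \<Rightarrow> 'w \<Rightarrow> real"
  assumes "limsup (\<lambda>k. ereal (indicator {z. \<xi> k z < a \<and> a < \<xi> (Suc k) z} x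
      * (\<xi> (Suc k) x - a))) \<le> ereal b"
  shows "\<forall>\<^sub>F k in sequentially. \<xi> k x < a \<and> a < \<xi> (Suc k) x \<longrightarrow> \<xi> (Suc k) x \<le> a + (b + 1)"
proof -
  have "limsup (\<lambda>k. ereal (indicator {z. \<xi> k z < a \<and> a < \<xi> (Suc k) z} x
      * (\<xi> (Suc k) x - a))) < ereal (b + 1)"
    using assms by (rule le_less_trans) simp
  from Limsup_lessD[OF this] show ?thesis
    by eventually_elim (auto simp: indicator_def)
qed

theorem mainTheorem3:
  fixes M :: "'w measure" and F :: "nat \<Rightarrow> 'w measure"
    and \<xi> :: "nat \<Rightarrow> 'w \<Rightarrow> real" and a b :: real
  assumes prob: "prob_space M"
    and subalg: "\<And>n. subalgebra M (F n)"
    and filt_mono: "\<And>m n. m \<le> n \<Longrightarrow> sets (F m) \<subseteq> sets (F n)"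
    and adapted: "\<And>n. \<xi> n \<in> borel_measurable (F n)"
    and b_pos: "b > 0"
    and cond1: "\<And>k. AE x in M. real_cond_exp M (F k)
        (\<lambda>y. (\<xi> (Suc k) y - \<xi> k y) * indicator {z. \<xi> k z \<ge> a} y) x \<le> 0"
    and cond2: "AE x in M. limsup (\<lambda>k. ereal (indicator {z. \<xi> k z < a \<and> a < \<xi> (Suc k) z} x
        * (\<xi> (Suc k) x - a))) \<le> ereal b"
    and cond3: "(\<Sum>k. \<integral>\<^sup>+ x. ennreal ((\<xi> (Suc k) x - \<xi> k x)\<^sup>2 * indicator {z. \<xi> k z \<ge> a} x) \<partial>M) < \<infinity>"
  shows "AE x in M. limsup (\<lambda>n. ereal (\<xi> n x)) < \<infinity>"
proof -
  interpret filtered_prob_space M F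
    using prob subalg filt_mono by (intro filtered_prob_space.intro filtered_prob_space_axioms.intro)
  define D where "D = (\<lambda>k y. (\<xi> (Suc k) y - \<xi> k y) * indicator {z. \<xi> k z \<ge> a} y)"
  define C where "C k = real_cond_exp M (F k) (D k)" for k
  have D_adapted: "D k \<in> borel_measurable (F (Suc k))" for k
    using adapted measurable_F_mono[OF le_SucI adapted] unfolding D_def by measurable
  have "(D k x)\<^sup>2 = (\<xi> (Suc k) x - \<xi> k x)\<^sup>2 * indicator {z. \<xi> k z \<ge> a} x" for k x
    by (simp add: D_def indicator_def)
  then have "(\<Sum>k. \<integral>\<^sup>+ x. ennreal ((D k x)\<^sup>2) \<partial>M) < \<infinity>"
    using cond3 by simp
  from AE_bounded_martingale_part[OF D_adapted this]
  have bounded: "AE x in M. \<exists>K. \<forall>n. \<bar>\<Sum>k<n. D k x - C k x\<bar> \<le> K"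
    by (simp only: C_def)
  have nonpos: "AE x in M. \<forall>k. C k x \<le> 0"
    using cond1 by (simp add: C_def D_def AE_all_countable)
  from cond2 bounded nonpos show ?thesis
  proof eventually_elim
    case (elim x)
    then obtain K where K: "\<And>n. \<bar>\<Sum>k<n. D k x - C k x\<bar> \<le> K" by auto
    have step: "a \<le> \<xi> k x \<Longrightarrow> \<xi> (Suc k) x - \<xi> k x \<le> D k x - C k x" for k
      using elim(3) by (auto simp: D_def)
    have "0 \<le> b + 1" using b_pos by linarith
    with step K eventually_overshoot_le[OF elim(1)] show ?case
      by (rule bounded_above_by_dominated_increments)
  qed
qed

end
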